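(* There is an absolute constant $C$ such that for all sufficiently large $N$, every $b\in Z(W)$ and every function $f:[N]\to\mathbb{C}$ with $|f(n)|\le\nu_b(n)$ for all $n$, $$\sum_{n\in[N]}|\hat f(n/N)|^4\le C N^4(\log N)^8.$$
   Context: Standing setup: $N$ is a large positive integer and $w\ge 3$ is a real parameter with $w\le C_0\log\log\log N$ for a fixed absolute constant $C_0$; $W=8\prod_{2<p<w}p$ (product over primes). $[q]=\{1,\dots,q\}$, $[q]^*=\{a\in[q]:\gcd(a,q)=1\}$. $Z(W)=\{b\in[W]^*: b\equiv h^2\pmod W\text{ for some } h\}$; for $b\in Z(W)$, $H(b)=\{h\in[W]^*:h^2\equiv b\pmod W\}$, $H=|H(b)|=4\cdot 2^{|\{p:2<p<w\}|}$. $\phi$ is Euler's function, $e(x)=e^{2\pi ix}$, $\hat f(\alpha)=\sum_nf(n)e(n\alpha)$. $\nu_b(n)=\frac{\phi(W)}{WH}2p\log p$ if $n\in[N]$ and $Wn+b=p^2$ with $p$ prime, $\nu_b(n)=0$ otherwise. *)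

theory Defs
  imports "HOL-Analysis.Analysis" "HOL-Number_Theory.Number_Theory"
begin

definition WW :: "real \<Rightarrow> nat" where
  "WW w = 8 * (\<Prod>p\<in>{p::nat. prime p \<and> 2 < p \<and> real p < w}. p)"

definition ZW :: "nat \<Rightarrow> nat set" where
  "ZW W = {b \<in> {1..W}. coprime b W \<and> (\<exists>h::nat. [b = h^2] (mod W))}"

definition HW :: "nat \<Rightarrow> nat \<Rightarrow> nat set" where
  "HW W b = {h \<in> {1..W}. coprime h W \<and> [h^2 = b] (mod W)}"

text \<open>nu_b(n), depending on N, W, b. If W n + b = p^2 with p prime, then p = sqrt(W n + b).\<close>
definition nu :: "nat \<Rightarrow> nat \<Rightarrow> nat \<Rightarrow> nat \<Rightarrow> real" where
  "nu N W b n =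
     (if n \<in> {1..N} \<and> (\<exists>p::nat. prime p \<and> W * n + b = p^2)
      then (let p = sqrt (real (W * n + b)) in
              real (totient W) / (real W * real (card (HW W b))) * (2 * p * ln p))
      else 0)"

definition e :: "real \<Rightarrow> complex" where
  "e x = exp (2 * pi * \<i> * complex_of_real x)"

definition fhat :: "nat \<Rightarrow> (nat \<Rightarrow> complex) \<Rightarrow> real \<Rightarrow> complex" where
  "fhat N f \<alpha> = (\<Sum>n\<in>{1..N}. f n * e (real n * \<alpha>))"

end

theory Submission
  imports Defs "HOL-Real_Asymp.Real_Asymp"
begin

text \<open>
  Orthogonality of the characters \<open>e (m k / N)\<close> for \<open>0 < \<bar>m\<bar> < N\<close> bounds the fourth moment of
  \<open>fhat\<close> at the points \<open>k / N\<close> by \<open>4 N\<close> times the additive energy of \<open>\<bar>f\<bar>\<close>.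
  The function \<open>f\<close> is supported on those \<open>n\<close> with \<open>W n + b = p\<^sup>2\<close>, \<open>p \<le> M \<approx> sqrt (W N)\<close>, so every
  additive quadruple \<open>n\<^sub>1 + n\<^sub>2 = n\<^sub>3 + n\<^sub>4\<close> lifts to a solution of
  \<open>p\<^sub>1\<^sup>2 + p\<^sub>2\<^sup>2 = p\<^sub>3\<^sup>2 + p\<^sub>4\<^sup>2\<close>; off the diagonal, \<open>(p\<^sub>1 - p\<^sub>3)(p\<^sub>1 + p\<^sub>3) = (p\<^sub>4 - p\<^sub>2)(p\<^sub>4 + p\<^sub>2)\<close>
  embeds these into the multiplicative quadruples of \<open>[2M]\<close>, of which there are
  \<open>O (M\<^sup>2 log\<^sup>2 M)\<close> by a divisor-sum count. With \<open>\<bar>f\<bar> \<le> sqrt (W N) log (W N)\<close> this gives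
  \<open>O (W\<^sup>3 N\<^sup>4 log\<^sup>6 N)\<close>, and \<open>W\<^sup>3 \<le> log\<^sup>2 N\<close> eventually because \<open>W \<le> 8 w\<^sup>w\<close> and
  \<open>w \<le> C\<^sub>0 log log log N\<close>.
\<close>

definition mult_quadruples :: "nat \<Rightarrow> (nat \<times> nat \<times> nat \<times> nat) set" where
  "mult_quadruples K =
     {(a, a', c, c'). a \<in> {1..K} \<and> a' \<in> {1..K} \<and> c \<in> {1..K} \<and> c' \<in> {1..K} \<and> a * a' = c * c'}"

definition square_quadruples :: "nat \<Rightarrow> (nat \<times> nat \<times> nat \<times> nat) set" where
  "square_quadruples M =
     {(k1, k2, k3, k4). k1 \<in> {1..M} \<and> k2 \<in> {1..M} \<and> k3 \<in> {1..M} \<and> k4 \<in> {1..M} \<and>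
        k1\<^sup>2 + k2\<^sup>2 = k3\<^sup>2 + k4\<^sup>2}"

lemma finite_mult_quadruples: "finite (mult_quadruples K)"
  by (rule finite_subset[of _ "{1..K} \<times> {1..K} \<times> {1..K} \<times> {1..K}"]) (auto simp: mult_quadruples_def)

lemma finite_square_quadruples: "finite (square_quadruples M)"
  by (rule finite_subset[of _ "{1..M} \<times> {1..M} \<times> {1..M} \<times> {1..M}"]) (auto simp: square_quadruples_def)

lemma harm_le_1_plus_ln: "1 \<le> n \<Longrightarrow> harm n \<le> 1 + ln (real n)"
  using euler_mascheroni_sequence_decreasing[of 1 n] by (simp add: harm_expand)

lemma card_divisor_pairs_le:
  "real (card (SIGMA u:{1..K}. {1..K div u})) \<le> real K * (1 + ln (real K))"
proof (cases "K = 0")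
  case False
  have "real (card (SIGMA u:{1..K}. {1..K div u})) = (\<Sum>u=1..K. real (K div u))"
    by simp
  also have "\<dots> \<le> (\<Sum>u=1..K. real K * inverse (real u))"
    by (intro sum_mono) (metis of_nat_div_le_of_nat divide_inverse)
  also have "\<dots> = real K * harm K"
    by (simp add: harm_def sum_distrib_left)
  also have "\<dots> \<le> real K * (1 + ln (real K))"
    using harm_le_1_plus_ln[of K] False by (intro mult_left_mono) auto
  finally show ?thesis .
qed simp

lemma mult_eq_mult_decompose:
  fixes a a' c c' :: nat
  assumes eq: "a * a' = c * c'" and "0 < a" "0 < c"
  obtains u v s t where "a = u * v" "c = u * s" "a' = s * t" "c' = v * t"
proof -
  define u where "u = gcd a c"
  define v where "v = a div u"
  define s where "s = c div u"
  have "0 < u" using assms unfolding u_def by simp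
  have a: "a = u * v" and c: "c = u * s"
    unfolding u_def v_def s_def by simp_all
  have "coprime v s"
    unfolding v_def s_def u_def using assms by (intro div_gcd_coprime) auto
  have "u * (v * a') = u * (s * c')"
    using eq unfolding a c by (simp add: ac_simps)
  then have vs: "v * a' = s * c'"
    using \<open>0 < u\<close> by simp
  then have "s dvd a'"
    using \<open>coprime v s\<close> by (metis coprime_commute coprime_dvd_mult_right_iff dvd_triv_left)
  then obtain t where a': "a' = s * t" ..
  have "0 < s" using \<open>0 < c\<close> c by (cases s) auto
  have "s * c' = s * (v * t)"
    using vs unfolding a' by (metis mult.left_commute)
  then have "c' = v * t"
    using \<open>0 < s\<close> by (metis mult_cancel_left neq0_conv)
  with a c a' show ?thesis by (rule that)
qed

lemma card_mult_quadruples_le: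
  "real (card (mult_quadruples K)) \<le> (real K * (1 + ln (real K)))\<^sup>2"
proof -
  define A where "A = (SIGMA u:{1..K}. {1..K div u})"
  define \<phi> :: "(nat \<times> nat) \<times> nat \<times> nat \<Rightarrow> nat \<times> nat \<times> nat \<times> nat"
    where "\<phi> = (\<lambda>((u, s), (v, t)). (u * v, s * t, u * s, v * t))"
  have "mult_quadruples K \<subseteq> \<phi> ` (A \<times> A)"
  proof
    fix x assume "x \<in> mult_quadruples K"
    then obtain a a' c c' where x: "x = (a, a', c, c')"
      and range: "a \<in> {1..K}" "a' \<in> {1..K}" "c \<in> {1..K}" "c' \<in> {1..K}" and eq: "a * a' = c * c'"
      unfolding mult_quadruples_def by auto
    obtain u v s t where uv: "a = u * v" "c = u * s" "a' = s * t" "c' = v * t"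
      by (rule mult_eq_mult_decompose[OF eq]) (use range in auto)
    have pos: "0 < u" "0 < v" "0 < s" "0 < t"
      using range unfolding uv by auto
    have "u * v \<le> K" "s * u \<le> K" "t * v \<le> K"
      using range unfolding uv by (auto simp: ac_simps)
    then have "((u, s), (v, t)) \<in> A \<times> A"
      using pos unfolding A_def
      by (auto simp: less_eq_div_iff_mult_less_eq intro: order_trans[OF _ \<open>u * v \<le> K\<close>])
    moreover have "x = \<phi> ((u, s), (v, t))"
      unfolding \<phi>_def x uv by simp
    ultimately show "x \<in> \<phi> ` (A \<times> A)" by blast
  qed
  then have "card (mult_quadruples K) \<le> card A * card A"
    using card_mono[OF _ \<open>_ \<subseteq> _\<close>] card_image_le[of "A \<times> A" \<phi>]
    by (simp add: A_def card_cartesian_product)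
  then have "real (card (mult_quadruples K)) \<le> real (card A) * real (card A)"
    by (metis of_nat_le_iff of_nat_mult)
  also have "\<dots> \<le> (real K * (1 + ln (real K)))\<^sup>2"
  proof -
    have A: "real (card A) \<le> real K * (1 + ln (real K))"
      unfolding A_def by (rule card_divisor_pairs_le)
    show ?thesis
      unfolding power2_eq_square using A order_trans[OF of_nat_0_le_iff A] by (intro mult_mono) auto
  qed
  finally show ?thesis .
qed

lemma sum_squares_eq_factor:
  fixes k1 k2 k3 k4 :: nat
  assumes eq: "k1\<^sup>2 + k2\<^sup>2 = k3\<^sup>2 + k4\<^sup>2" and "k3 < k1"
  shows "k2 < k4" "(k1 - k3) * (k1 + k3) = (k4 - k2) * (k4 + k2)"
proof -
  have "k3\<^sup>2 < k1\<^sup>2" using \<open>k3 < k1\<close> by (simp add: power_strict_mono)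
  then have "k2\<^sup>2 < k4\<^sup>2" using eq by linarith
  then show "k2 < k4" by (simp add: power_less_imp_less_base)
  have "(int k1)\<^sup>2 + (int k2)\<^sup>2 = (int k3)\<^sup>2 + (int k4)\<^sup>2"
    using eq by (metis of_nat_add of_nat_power)
  then have "(int k1 - int k3) * (int k1 + int k3) = (int k4 - int k2) * (int k4 + int k2)"
    by (simp add: algebra_simps power2_eq_square)
  with \<open>k2 < k4\<close> \<open>k3 < k1\<close> have "int ((k1 - k3) * (k1 + k3)) = int ((k4 - k2) * (k4 + k2))"
    by (simp add: of_nat_diff)
  then show "(k1 - k3) * (k1 + k3) = (k4 - k2) * (k4 + k2)"
    by (simp only: of_nat_eq_iff)
qed

lemma card_square_quadruples_le:
  "real (card (square_quadruples M)) \<le> 3 * (real (2 * M) * (1 + ln (real (2 * M))))\<^sup>2"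
proof -
  let ?S = "square_quadruples M"
  define D where "D = {(k1, k2, k3, k4) \<in> ?S. k1 = k3}"
  define G where "G = {(k1, k2, k3, k4) \<in> ?S. k3 < k1}"
  define L where "L = {(k1, k2, k3, k4) \<in> ?S. k1 < k3}"
  define g :: "nat \<times> nat \<times> nat \<times> nat \<Rightarrow> nat \<times> nat \<times> nat \<times> nat"
    where "g = (\<lambda>(k1, k2, k3, k4). (k1 - k3, k1 + k3, k4 - k2, k4 + k2))"
  define swap :: "nat \<times> nat \<times> nat \<times> nat \<Rightarrow> nat \<times> nat \<times> nat \<times> nat"
    where "swap = (\<lambda>(k1, k2, k3, k4). (k3, k4, k1, k2))"
  have split: "?S = D \<union> G \<union> L"
    unfolding D_def G_def L_def by auto
  have "card ?S \<le> card D + card G + card L"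
    unfolding split using card_Un_le[of "D \<union> G" L] card_Un_le[of D G] by linarith
  moreover have "card D \<le> M * M"
  proof -
    have "card D \<le> card ({1..M} \<times> {1..M})"
    proof (rule card_inj_on_le)
      have "(\<lambda>(k1, k2). (k1, k2, k1, k2)) ((\<lambda>(k1, k2, k3, k4). (k1, k2)) k) = k" if kD: "k \<in> D" for k
      proof -
        obtain k1 k2 k3 k4 where k: "k = (k1, k2, k3, k4)" by (cases k)
        have "k1 = k3" "k2 = k4"
          using kD unfolding k D_def square_quadruples_def by clarsimp+
        with k show ?thesis by simp
      qed
      then show "inj_on (\<lambda>(k1, k2, k3, k4). (k1, k2)) D"
        by (rule inj_on_inverseI)
      show "(\<lambda>(k1, k2, k3, k4). (k1, k2)) ` D \<subseteq> {1..M} \<times> {1..M}"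
        unfolding D_def square_quadruples_def by auto
    qed simp
    then show ?thesis by (simp add: card_cartesian_product)
  qed
  moreover have "card G \<le> card (mult_quadruples (2 * M))"
  proof (rule card_inj_on_le[OF _ _ finite_mult_quadruples])
    have "(\<lambda>(x, y, z, w). ((x + y) div 2, (w - z) div 2, (y - x) div 2, (z + w) div 2)) (g k) = k"
      if kG: "k \<in> G" for k
    proof -
      obtain k1 k2 k3 k4 where k: "k = (k1, k2, k3, k4)" by (cases k)
      have eq: "k1\<^sup>2 + k2\<^sup>2 = k3\<^sup>2 + k4\<^sup>2" and "k3 < k1"
        using kG unfolding k G_def square_quadruples_def by simp_all
      then have "k2 < k4" by (rule sum_squares_eq_factor(1))
      with \<open>k3 < k1\<close> have "(k1 - k3 + (k1 + k3)) div 2 = k1" "(k4 + k2 - (k4 - k2)) div 2 = k2"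
        "(k1 + k3 - (k1 - k3)) div 2 = k3" "(k4 - k2 + (k4 + k2)) div 2 = k4"
        by simp_all
      with k show ?thesis unfolding g_def by simp
    qed
    then show "inj_on g G" by (rule inj_on_inverseI)
    show "g ` G \<subseteq> mult_quadruples (2 * M)"
    proof
      fix y assume "y \<in> g ` G"
      then obtain k where "k \<in> G" and y: "y = g k" by blast
      obtain k1 k2 k3 k4 where k: "k = (k1, k2, k3, k4)" by (cases k)
      have range: "k1 \<in> {1..M}" "k2 \<in> {1..M}" "k3 \<in> {1..M}" "k4 \<in> {1..M}"
        and eq: "k1\<^sup>2 + k2\<^sup>2 = k3\<^sup>2 + k4\<^sup>2" and "k3 < k1"
        using \<open>k \<in> G\<close> unfolding k G_def square_quadruples_def by simp_all
      have "k2 < k4" "(k1 - k3) * (k1 + k3) = (k4 - k2) * (k4 + k2)"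
        using sum_squares_eq_factor[OF eq \<open>k3 < k1\<close>] by simp_all
      with range \<open>k3 < k1\<close> show "y \<in> mult_quadruples (2 * M)"
        unfolding y k mult_quadruples_def g_def by (simp, arith)
    qed
  qed
  moreover have "card L \<le> card G"
  proof (rule card_inj_on_le)
    show "inj_on swap L" unfolding swap_def by (auto intro: inj_onI)
    show "swap ` L \<subseteq> G" unfolding swap_def L_def G_def square_quadruples_def by auto
    show "finite G"
      unfolding G_def by (rule rev_finite_subset[OF finite_square_quadruples]) auto
  qed
  ultimately have "card ?S \<le> M * M + 2 * card (mult_quadruples (2 * M))"
    by linarith
  then have "real (card ?S) \<le> real (M * M + 2 * card (mult_quadruples (2 * M)))"
    by (simp only: of_nat_le_iff)
  also have "\<dots> = real M * real M + 2 * real (card (mult_quadruples (2 * M)))"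
    by simp
  also have "\<dots> \<le> 3 * (real (2 * M) * (1 + ln (real (2 * M))))\<^sup>2"
  proof -
    have "real M * real M \<le> (real (2 * M) * (1 + ln (real (2 * M))))\<^sup>2"
    proof (cases "M = 0")
      case False
      then have "0 \<le> ln (real (2 * M))" by simp
      then have "real M * 1 \<le> real (2 * M) * (1 + ln (real (2 * M)))"
        by (intro mult_mono) auto
      then show ?thesis
        unfolding power2_eq_square by (intro mult_mono) auto
    qed simp
    then show ?thesis using card_mult_quadruples_le[of "2 * M"] by linarith
  qed
  finally show ?thesis .
qed

lemma e_add: "e (x + y) = e x * e y"
  unfolding e_def by (simp add: distrib_left exp_add[symmetric])

lemma e_mult_cnj: "e x * cnj (e y) = e (x - y)"
  unfolding e_def by (simp add: exp_cnj exp_add[symmetric] algebra_simps)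

lemma e_of_nat_mult: "e (real k * x) = e x ^ k"
  unfolding e_def by (simp add: exp_of_nat_mult[symmetric] ac_simps)

lemma e_of_int: "e (of_int n) = 1"
  unfolding e_def exp_eq_1 by simp

lemma e_eq_1_imp_Ints: "e x = 1 \<Longrightarrow> x \<in> \<int>"
proof -
  assume "e x = 1"
  then have "exp (complex_of_real (2 * pi * x) * \<i>) = 1"
    unfolding e_def by (simp add: ac_simps)
  then obtain n :: int where "2 * pi * x = of_int (2 * n) * pi"
    unfolding exp_eq_1 by auto
  then show "x \<in> \<int>" by simp
qed

lemma sum_e_eq_0:
  fixes d :: int
  assumes "d \<noteq> 0" "\<bar>d\<bar> < int N"
  shows "(\<Sum>k=1..N. e (real_of_int d * (real k / real N))) = 0"
proof -
  have "N > 0" using assms by linarith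
  define z where "z = e (real_of_int d / real N)"
  have powers: "e (real_of_int d * (real k / real N)) = z ^ k" for k
    unfolding z_def e_of_nat_mult[symmetric] by (simp add: field_simps)
  have "z ^ N = 1"
    using powers[of N] \<open>N > 0\<close> e_of_int[of d] by simp
  have "z \<noteq> 1"
  proof
    assume "z = 1"
    then obtain n :: int where "real_of_int d / real N = of_int n"
      using e_eq_1_imp_Ints unfolding z_def by (metis Ints_cases)
    then have "d = n * int N"
      using \<open>N > 0\<close> by (simp add: field_simps) (metis of_int_eq_iff of_int_mult of_int_of_nat_eq)
    with assms show False
      by (cases "n = 0") (auto simp: abs_mult mult_le_cancel_right1 dest: order.strict_trans2[rotated])
  qed
  have "(\<Sum>k=1..N. e (real_of_int d * (real k / real N))) = (\<Sum>k<N. z ^ Suc k)"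
    unfolding powers by (rule sum.reindex_bij_witness[of _ Suc "\<lambda>k. k - 1"]) auto
  also have "\<dots> = z * (\<Sum>k<N. z ^ k)"
    by (simp add: sum_distrib_left)
  also have "\<dots> = 0"
    using \<open>z \<noteq> 1\<close> \<open>z ^ N = 1\<close> by (simp add: geometric_sum)
  finally show ?thesis .
qed

lemma norm_sum_e_power2:
  "complex_of_real ((norm (\<Sum>P\<in>A. c P * e (real (\<sigma> P) * t)))\<^sup>2)
     = (\<Sum>P\<in>A. \<Sum>Q\<in>A. c P * cnj (c Q) * e ((real (\<sigma> P) - real (\<sigma> Q)) * t))"
proof -
  have "complex_of_real ((norm (\<Sum>P\<in>A. c P * e (real (\<sigma> P) * t)))\<^sup>2)
      = (\<Sum>P\<in>A. c P * e (real (\<sigma> P) * t)) * cnj (\<Sum>Q\<in>A. c Q * e (real (\<sigma> Q) * t))"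
    by (rule complex_norm_square)
  also have "\<dots> = (\<Sum>P\<in>A. \<Sum>Q\<in>A. c P * cnj (c Q) * (e (real (\<sigma> P) * t) * cnj (e (real (\<sigma> Q) * t))))"
    unfolding cnj_sum sum_product by (simp add: ac_simps)
  also have "\<dots> = (\<Sum>P\<in>A. \<Sum>Q\<in>A. c P * cnj (c Q) * e ((real (\<sigma> P) - real (\<sigma> Q)) * t))"
    by (simp only: e_mult_cnj left_diff_distrib)
  finally show ?thesis .
qed

lemma mean_square_sum_e_le:
  fixes c :: "'a \<Rightarrow> complex" and \<sigma> :: "'a \<Rightarrow> nat"
  assumes close: "\<And>P Q. P \<in> A \<Longrightarrow> Q \<in> A \<Longrightarrow> c P \<noteq> 0 \<Longrightarrow> c Q \<noteq> 0 \<Longrightarrow> \<sigma> P < \<sigma> Q + N \<and> \<sigma> Q < \<sigma> P + N"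
  shows "(\<Sum>k=1..N. (norm (\<Sum>P\<in>A. c P * e (real (\<sigma> P) * (real k / real N))))\<^sup>2)
           \<le> real N * (\<Sum>P\<in>A. \<Sum>Q\<in>A. if \<sigma> P = \<sigma> Q then norm (c P) * norm (c Q) else 0)"
proof -
  have diagonal: "(\<Sum>k=1..N. c P * cnj (c Q) * e ((real (\<sigma> P) - real (\<sigma> Q)) * (real k / real N)))
      = (if \<sigma> P = \<sigma> Q then of_nat N * (c P * cnj (c Q)) else 0)" if "P \<in> A" "Q \<in> A" for P Q
  proof (cases "c P = 0 \<or> c Q = 0 \<or> \<sigma> P = \<sigma> Q")
    case False
    then have "(\<Sum>k=1..N. e (real_of_int (int (\<sigma> P) - int (\<sigma> Q)) * (real k / real N))) = 0"
      using close[OF that] by (intro sum_e_eq_0) auto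
    with False show ?thesis by (simp add: sum_distrib_left[symmetric])
  qed (auto simp: e_def)
  have "complex_of_real (\<Sum>k=1..N. (norm (\<Sum>P\<in>A. c P * e (real (\<sigma> P) * (real k / real N))))\<^sup>2)
      = (\<Sum>P\<in>A. \<Sum>Q\<in>A. \<Sum>k=1..N. c P * cnj (c Q) * e ((real (\<sigma> P) - real (\<sigma> Q)) * (real k / real N)))"
    unfolding of_real_sum norm_sum_e_power2 by (subst sum.swap, rule sum.cong[OF refl], rule sum.swap)
  also have "\<dots> = (\<Sum>P\<in>A. \<Sum>Q\<in>A. if \<sigma> P = \<sigma> Q then of_nat N * (c P * cnj (c Q)) else 0)"
    using diagonal by (intro sum.cong refl) auto
  finally have eq: "complex_of_real (\<Sum>k=1..N. (norm (\<Sum>P\<in>A. c P * e (real (\<sigma> P) * (real k / real N))))\<^sup>2)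
      = (\<Sum>P\<in>A. \<Sum>Q\<in>A. if \<sigma> P = \<sigma> Q then of_nat N * (c P * cnj (c Q)) else 0)" .
  have "(\<Sum>k=1..N. (norm (\<Sum>P\<in>A. c P * e (real (\<sigma> P) * (real k / real N))))\<^sup>2)
      = norm (\<Sum>P\<in>A. \<Sum>Q\<in>A. if \<sigma> P = \<sigma> Q then of_nat N * (c P * cnj (c Q)) else 0)"
    unfolding eq[symmetric] norm_of_real by (simp add: sum_nonneg)
  also have "\<dots> \<le> (\<Sum>P\<in>A. \<Sum>Q\<in>A. norm (if \<sigma> P = \<sigma> Q then of_nat N * (c P * cnj (c Q)) else 0))"
    by (rule order_trans[OF norm_sum sum_mono]) (rule norm_sum)
  also have "\<dots> = real N * (\<Sum>P\<in>A. \<Sum>Q\<in>A. if \<sigma> P = \<sigma> Q then norm (c P) * norm (c Q) else 0)"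
    by (simp add: sum_distrib_left norm_mult if_distrib cong: if_cong)
  finally show ?thesis .
qed

definition additive_energy :: "nat \<Rightarrow> (nat \<Rightarrow> complex) \<Rightarrow> real" where
  "additive_energy N f =
     (\<Sum>P\<in>{1..N} \<times> {1..N}. \<Sum>Q\<in>{1..N} \<times> {1..N}.
        if fst P + snd P = fst Q + snd Q then norm (f (fst P) * f (snd P)) * norm (f (fst Q) * f (snd Q))
        else 0)"

lemma fhat_power2:
  "(fhat N f \<alpha>)\<^sup>2 = (\<Sum>P\<in>{1..N} \<times> {1..N}. f (fst P) * f (snd P) * e (real (fst P + snd P) * \<alpha>))"
proof -
  have "(fhat N f \<alpha>)\<^sup>2 = (\<Sum>n\<in>{1..N}. \<Sum>m\<in>{1..N}. f n * e (real n * \<alpha>) * (f m * e (real m * \<alpha>)))"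
    unfolding fhat_def power2_eq_square by (rule sum_product)
  also have "\<dots> = (\<Sum>n\<in>{1..N}. \<Sum>m\<in>{1..N}. f n * f m * e (real (n + m) * \<alpha>))"
    by (simp add: e_add[symmetric] algebra_simps)
  finally show ?thesis
    by (simp add: sum.cartesian_product case_prod_beta)
qed

lemma power2_add_le: "(x + y)\<^sup>2 \<le> 2 * x\<^sup>2 + 2 * (y :: 'a :: linordered_idom)\<^sup>2"
  using zero_le_power2[of "x - y"] unfolding power2_eq_square by (simp add: algebra_simps)

text \<open>Pair sums lie in \<open>[2, 2N]\<close>, an interval of length \<open>2N - 2\<close>; splitting it at \<open>N + 1\<close>
  gives two halves in which all frequencies differ by less than \<open>N\<close>, so the mean-value
  estimate applies to each half.\<close>
lemma sum_norm_fhat_power4_le: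
  "(\<Sum>k\<in>{1..N}. norm (fhat N f (real k / real N)) ^ 4) \<le> 4 * real N * additive_energy N f"
proof -
  define I where "I = {1..N} \<times> {1..N}"
  define \<sigma> :: "nat \<times> nat \<Rightarrow> nat" where "\<sigma> P = fst P + snd P" for P
  define a where "a P = f (fst P) * f (snd P)" for P
  define low where "low P = (if \<sigma> P \<le> N + 1 then a P else 0)" for P
  define high where "high P = (if \<sigma> P \<le> N + 1 then 0 else a P)" for P
  define S :: "(nat \<times> nat \<Rightarrow> complex) \<Rightarrow> nat \<Rightarrow> complex"
    where "S c k = (\<Sum>P\<in>I. c P * e (real (\<sigma> P) * (real k / real N)))" for c k
  define E :: "(nat \<times> nat \<Rightarrow> complex) \<Rightarrow> real"
    where "E c = (\<Sum>P\<in>I. \<Sum>Q\<in>I. if \<sigma> P = \<sigma> Q then norm (c P) * norm (c Q) else 0)" for c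
  have range: "2 \<le> \<sigma> P \<and> \<sigma> P \<le> 2 * N" if "P \<in> I" for P
    using that unfolding I_def \<sigma>_def by auto
  have mean_low: "(\<Sum>k=1..N. (norm (S low k))\<^sup>2) \<le> real N * E low"
    unfolding S_def E_def
    by (rule mean_square_sum_e_le) (use range in \<open>fastforce simp: low_def split: if_splits\<close>)
  have mean_high: "(\<Sum>k=1..N. (norm (S high k))\<^sup>2) \<le> real N * E high"
    unfolding S_def E_def
    by (rule mean_square_sum_e_le) (use range in \<open>fastforce simp: high_def split: if_splits\<close>)
  have E_mono: "E c \<le> E a" if "\<And>P. norm (c P) \<le> norm (a P)" for c
    unfolding E_def by (intro sum_mono) (auto intro: mult_mono that)
  have "norm (fhat N f (real k / real N)) ^ 4 \<le> 2 * (norm (S low k))\<^sup>2 + 2 * (norm (S high k))\<^sup>2" for k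
  proof -
    have split: "(fhat N f (real k / real N))\<^sup>2 = S low k + S high k"
      unfolding fhat_power2 S_def I_def sum.distrib[symmetric] low_def high_def a_def \<sigma>_def
      by (intro sum.cong refl) (simp add: distrib_right)
    have "norm (fhat N f (real k / real N)) ^ 4 = (norm ((fhat N f (real k / real N))\<^sup>2))\<^sup>2"
      by (simp add: norm_power flip: power_mult)
    also have "\<dots> = (norm (S low k + S high k))\<^sup>2"
      unfolding split ..
    also have "\<dots> \<le> (norm (S low k) + norm (S high k))\<^sup>2"
      by (intro power_mono norm_triangle_ineq) simp
    also have "\<dots> \<le> 2 * (norm (S low k))\<^sup>2 + 2 * (norm (S high k))\<^sup>2"
      by (rule power2_add_le)
    finally show ?thesis .
  qed
  then have "(\<Sum>k\<in>{1..N}. norm (fhat N f (real k / real N)) ^ 4)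
      \<le> 2 * (\<Sum>k=1..N. (norm (S low k))\<^sup>2) + 2 * (\<Sum>k=1..N. (norm (S high k))\<^sup>2)"
    by (simp add: sum_distrib_left sum.distrib[symmetric] sum_mono)
  also have "\<dots> \<le> 2 * (real N * E a) + 2 * (real N * E a)"
  proof -
    have "E low \<le> E a" "E high \<le> E a"
      by (rule E_mono, simp add: low_def high_def)+
    then have "real N * E low \<le> real N * E a" "real N * E high \<le> real N * E a"
      by (simp_all add: mult_left_mono)
    with mean_low mean_high show ?thesis by linarith
  qed
  also have "\<dots> = 4 * real N * additive_energy N f"
    unfolding E_def additive_energy_def I_def a_def \<sigma>_def by simp
  finally show ?thesis .
qed

definition additive_quadruples :: "nat \<Rightarrow> (nat \<Rightarrow> complex) \<Rightarrow> ((nat \<times> nat) \<times> nat \<times> nat) set" where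
  "additive_quadruples N f =
     {((n1, n2), (n3, n4)). n1 \<in> {1..N} \<and> n2 \<in> {1..N} \<and> n3 \<in> {1..N} \<and> n4 \<in> {1..N} \<and>
        n1 + n2 = n3 + n4 \<and> f n1 \<noteq> 0 \<and> f n2 \<noteq> 0 \<and> f n3 \<noteq> 0 \<and> f n4 \<noteq> 0}"

lemma additive_energy_le_card:
  assumes bound: "\<And>n. n \<in> {1..N} \<Longrightarrow> norm (f n) \<le> V"
  shows "additive_energy N f \<le> V ^ 4 * real (card (additive_quadruples N f))"
proof -
  define I where "I = {1..N} \<times> {1..N}"
  let ?Z = "additive_quadruples N f"
  have "?Z \<subseteq> I \<times> I"
    unfolding additive_quadruples_def I_def by auto
  have "additive_energy N f
      = (\<Sum>(P, Q)\<in>I \<times> I. if fst P + snd P = fst Q + snd Q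
           then norm (f (fst P) * f (snd P)) * norm (f (fst Q) * f (snd Q)) else 0)"
    unfolding additive_energy_def I_def by (rule sum.cartesian_product)
  also have "\<dots> \<le> (\<Sum>PQ\<in>I \<times> I. if PQ \<in> ?Z then V ^ 4 else 0)"
  proof (rule sum_mono)
    fix PQ assume "PQ \<in> I \<times> I"
    then obtain n1 n2 n3 n4 where PQ: "PQ = ((n1, n2), (n3, n4))"
      and n: "n1 \<in> {1..N}" "n2 \<in> {1..N}" "n3 \<in> {1..N}" "n4 \<in> {1..N}"
      unfolding I_def by auto
    have "norm (f n1) * norm (f n2) * (norm (f n3) * norm (f n4)) \<le> V * V * (V * V)"
      using bound[OF n(1)] bound[OF n(2)] bound[OF n(3)] bound[OF n(4)]
      by (intro mult_mono) (auto intro: order_trans[OF norm_ge_zero])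
    then show "(case PQ of (P, Q) \<Rightarrow> if fst P + snd P = fst Q + snd Q
          then norm (f (fst P) * f (snd P)) * norm (f (fst Q) * f (snd Q)) else 0)
        \<le> (if PQ \<in> ?Z then V ^ 4 else 0)"
      using n unfolding PQ additive_quadruples_def by (auto simp: norm_mult power4_eq_xxxx)
  qed
  also have "\<dots> = V ^ 4 * real (card ?Z)"
    using \<open>?Z \<subseteq> I \<times> I\<close> by (simp add: sum.If_cases I_def Int_absorb1)
  finally show ?thesis .
qed

lemma card_additive_quadruples_le:
  assumes "0 < W"
    and support: "\<And>n. n \<in> {1..N} \<Longrightarrow> f n \<noteq> 0 \<Longrightarrow> \<exists>p\<in>{1..M}. W * n + b = p\<^sup>2"
  shows "card (additive_quadruples N f) \<le> card (square_quadruples M)"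
proof -
  define q where "q p = (p\<^sup>2 - b) div W" for p :: nat
  have q: "q p = n" if "W * n + b = p\<^sup>2" for n p
    using that \<open>0 < W\<close> unfolding q_def by (metis add_diff_cancel_right' nonzero_mult_div_cancel_left
      less_numeral_extra(3))
  have "additive_quadruples N f \<subseteq> (\<lambda>(p1, p2, p3, p4). ((q p1, q p2), (q p3, q p4))) ` square_quadruples M"
  proof
    fix PQ assume "PQ \<in> additive_quadruples N f"
    then obtain n1 n2 n3 n4 where PQ: "PQ = ((n1, n2), (n3, n4))"
      and n: "n1 \<in> {1..N}" "n2 \<in> {1..N}" "n3 \<in> {1..N}" "n4 \<in> {1..N}"
      and sums: "n1 + n2 = n3 + n4" and nz: "f n1 \<noteq> 0" "f n2 \<noteq> 0" "f n3 \<noteq> 0" "f n4 \<noteq> 0"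
      unfolding additive_quadruples_def by auto
    obtain p1 p2 p3 p4 where p: "p1 \<in> {1..M}" "p2 \<in> {1..M}" "p3 \<in> {1..M}" "p4 \<in> {1..M}"
      and sq: "W * n1 + b = p1\<^sup>2" "W * n2 + b = p2\<^sup>2" "W * n3 + b = p3\<^sup>2" "W * n4 + b = p4\<^sup>2"
      using support[OF n(1) nz(1)] support[OF n(2) nz(2)] support[OF n(3) nz(3)] support[OF n(4) nz(4)]
      by blast
    have "p1\<^sup>2 + p2\<^sup>2 = p3\<^sup>2 + p4\<^sup>2"
    proof -
      have "p1\<^sup>2 + p2\<^sup>2 = W * (n1 + n2) + 2 * b" using sq(1,2) by (simp add: algebra_simps)
      also have "\<dots> = p3\<^sup>2 + p4\<^sup>2" using sq(3,4) sums by (simp add: algebra_simps)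
      finally show ?thesis .
    qed
    with p have "(p1, p2, p3, p4) \<in> square_quadruples M"
      unfolding square_quadruples_def by simp
    moreover have "PQ = ((q p1, q p2), (q p3, q p4))"
      unfolding PQ using q[OF sq(1)] q[OF sq(2)] q[OF sq(3)] q[OF sq(4)] by simp
    ultimately show "PQ \<in> (\<lambda>(p1, p2, p3, p4). ((q p1, q p2), (q p3, q p4))) ` square_quadruples M"
      by force
  qed
  then show ?thesis
    by (meson card_image_le card_mono finite_imageI finite_square_quadruples order_trans)
qed

lemma nu_eq_0_unless_prime_square:
  assumes "\<not> (n \<in> {1..N} \<and> (\<exists>p. prime p \<and> W * n + b = p\<^sup>2))"
  shows "nu N W b n = 0"
  unfolding nu_def using assms by (rule if_not_P)

lemma nu_le_sqrt_ln:
  assumes "0 < W" "b \<le> W"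
  shows "nu N W b n \<le> sqrt (real (W * (N + 1))) * ln (real (W * (N + 1)))"
proof -
  define R where "R = real (W * (N + 1))"
  have "1 \<le> W * (N + 1)" using \<open>0 < W\<close> by (simp add: Suc_le_eq)
  then have "1 \<le> R" unfolding R_def by (metis of_nat_1 of_nat_le_iff)
  show ?thesis
  proof (cases "n \<in> {1..N} \<and> (\<exists>p. prime p \<and> W * n + b = p\<^sup>2)")
    case False
    then show ?thesis using \<open>1 \<le> R\<close> by (simp add: nu_eq_0_unless_prime_square R_def)
  next
    case True
    define x where "x = sqrt (real (W * n + b))"
    define \<kappa> where "\<kappa> = real (totient W) / (real W * real (card (HW W b)))"
    have "\<kappa> \<le> 1"
    proof (cases "card (HW W b) = 0")
      case False
      have "real (totient W) \<le> real W * real (card (HW W b))"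
        using totient_le[of W] False by (simp add: order_trans[OF _ mult_le_cancel_left1[THEN iffD2]])
      then show ?thesis unfolding \<kappa>_def using \<open>0 < W\<close> False by (simp add: divide_le_eq_1)
    qed (simp add: \<kappa>_def)
    have "1 \<le> W * n" using True \<open>0 < W\<close> by (simp add: Suc_le_eq)
    then have "1 \<le> real (W * n + b)" by (metis le_add1 of_nat_1 of_nat_le_iff order_trans)
    then have "1 \<le> x" unfolding x_def by simp
    have "W * n + b \<le> W * (N + 1)" using True \<open>b \<le> W\<close> by (simp add: algebra_simps add_mono)
    then have "real (W * n + b) \<le> R" unfolding R_def by (simp only: of_nat_le_iff)
    then have "x \<le> sqrt R" unfolding x_def by simp
    have "nu N W b n = \<kappa> * (2 * x * ln x)"
      unfolding nu_def \<kappa>_def x_def using True by (simp add: Let_def)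
    also have "\<dots> \<le> 2 * (x * ln x)"
      using \<open>\<kappa> \<le> 1\<close> \<open>1 \<le> x\<close> mult_right_mono[of \<kappa> 1 "2 * x * ln x"] by simp
    also have "\<dots> \<le> 2 * (sqrt R * ln (sqrt R))"
      using \<open>1 \<le> x\<close> \<open>x \<le> sqrt R\<close> \<open>1 \<le> R\<close> by (intro mult_left_mono mult_mono) auto
    also have "\<dots> = sqrt R * ln R" using \<open>1 \<le> R\<close> by (simp add: ln_sqrt)
    finally show ?thesis unfolding R_def .
  qed
qed

lemma floor_sqrt_log_factor_le:
  assumes "1 \<le> R"
  defines "M \<equiv> nat \<lfloor>sqrt R\<rfloor>"
  shows "(real (2 * M) * (1 + ln (real (2 * M))))\<^sup>2 \<le> 4 * R * (2 + ln R)\<^sup>2"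
proof -
  have "1 \<le> sqrt R" using assms by simp
  have M_eq: "real M = of_int \<lfloor>sqrt R\<rfloor>"
    unfolding M_def using \<open>1 \<le> sqrt R\<close> by simp
  have "1 \<le> real M"
    unfolding M_eq using \<open>1 \<le> sqrt R\<close> by (simp add: le_floor_iff)
  have "real M \<le> sqrt R"
    unfolding M_eq by (rule of_int_floor_le)
  have "ln (real (2 * M)) \<le> ln (2 * sqrt R)"
    using \<open>1 \<le> real M\<close> \<open>real M \<le> sqrt R\<close> \<open>1 \<le> R\<close> by (subst ln_le_cancel_iff) auto
  also have "\<dots> = ln 2 + ln R / 2"
    using \<open>1 \<le> R\<close> by (simp add: ln_mult ln_sqrt)
  also have "\<dots> \<le> 1 + ln R"
    using ln_2_less_1 ln_ge_zero[OF \<open>1 \<le> R\<close>] by linarith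
  finally have "0 \<le> 1 + ln (real (2 * M))" "1 + ln (real (2 * M)) \<le> 2 + ln R"
    using \<open>1 \<le> real M\<close> by simp_all
  then have "real (2 * M) * (1 + ln (real (2 * M))) \<le> (2 * sqrt R) * (2 + ln R)"
    using \<open>real M \<le> sqrt R\<close> \<open>1 \<le> R\<close> by (intro mult_mono) auto
  then have "(real (2 * M) * (1 + ln (real (2 * M))))\<^sup>2 \<le> (2 * sqrt R * (2 + ln R))\<^sup>2"
    using \<open>0 \<le> 1 + ln (real (2 * M))\<close> by (intro power_mono) auto
  also have "\<dots> = 4 * R * (2 + ln R)\<^sup>2"
    using \<open>1 \<le> R\<close> by (simp add: power_mult_distrib)
  finally show ?thesis .
qed

lemma sum_norm_fhat_power4_le_nu:
  assumes "0 < W" "b \<le> W" and bound: "\<forall>n\<in>{1..N}. norm (f n) \<le> nu N W b n"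
  defines "R \<equiv> real (W * (N + 1))"
  shows "(\<Sum>k\<in>{1..N}. norm (fhat N f (real k / real N)) ^ 4)
           \<le> 48 * real N * R ^ 3 * ln R ^ 4 * (2 + ln R)\<^sup>2"
proof -
  define M where "M = nat \<lfloor>sqrt R\<rfloor>"
  have "1 \<le> W * (N + 1)" using \<open>0 < W\<close> by (simp add: Suc_le_eq)
  then have "1 \<le> R" unfolding R_def by (metis of_nat_1 of_nat_le_iff)
  have support: "\<exists>p\<in>{1..M}. W * n + b = p\<^sup>2" if "n \<in> {1..N}" "f n \<noteq> 0" for n
  proof -
    have "nu N W b n \<noteq> 0" using bound that by (metis norm_le_zero_iff)
    then obtain p where "prime p" and p: "W * n + b = p\<^sup>2"
      using nu_eq_0_unless_prime_square by blast
    have "W * n + b \<le> W * (N + 1)" using that \<open>b \<le> W\<close> by (simp add: algebra_simps add_mono)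
    then have "(real p)\<^sup>2 \<le> R"
      unfolding R_def p by (metis of_nat_le_iff of_nat_power)
    then have "real p \<le> sqrt R" by (rule real_le_rsqrt)
    then have "p \<le> M"
      unfolding M_def by (simp add: le_nat_floor)
    moreover have "1 \<le> p" using prime_gt_0_nat[OF \<open>prime p\<close>] by simp
    ultimately show ?thesis using p by auto
  qed
  have "(\<Sum>k\<in>{1..N}. norm (fhat N f (real k / real N)) ^ 4) \<le> 4 * real N * additive_energy N f"
    by (rule sum_norm_fhat_power4_le)
  also have "\<dots> \<le> 4 * real N * ((sqrt R * ln R) ^ 4 * real (card (square_quadruples M)))"
  proof -
    have "additive_energy N f \<le> (sqrt R * ln R) ^ 4 * real (card (additive_quadruples N f))"
      using bound nu_le_sqrt_ln[OF \<open>0 < W\<close> \<open>b \<le> W\<close>] unfolding R_def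
      by (intro additive_energy_le_card) (meson order_trans)
    also have "\<dots> \<le> (sqrt R * ln R) ^ 4 * real (card (square_quadruples M))"
      using card_additive_quadruples_le[OF \<open>0 < W\<close> support] by (simp add: mult_left_mono)
    finally show ?thesis by (simp add: mult_left_mono)
  qed
  also have "\<dots> \<le> 4 * real N * ((sqrt R * ln R) ^ 4 * (3 * (real (2 * M) * (1 + ln (real (2 * M))))\<^sup>2))"
    using card_square_quadruples_le[of M] by (intro mult_left_mono) auto
  also have "\<dots> \<le> 4 * real N * (R\<^sup>2 * ln R ^ 4 * (3 * (4 * R * (2 + ln R)\<^sup>2)))"
  proof -
    have "sqrt R ^ 4 = (sqrt R ^ 2) ^ 2" by (simp flip: power_mult)
    then have V: "(sqrt R * ln R) ^ 4 = R\<^sup>2 * ln R ^ 4"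
      using \<open>1 \<le> R\<close> by (simp add: power_mult_distrib)
    have "(real (2 * M) * (1 + ln (real (2 * M))))\<^sup>2 \<le> 4 * R * (2 + ln R)\<^sup>2"
      unfolding M_def by (rule floor_sqrt_log_factor_le[OF \<open>1 \<le> R\<close>])
    then show ?thesis
      unfolding V by (intro mult_left_mono) auto
  qed
  also have "\<dots> = 48 * real N * R ^ 3 * ln R ^ 4 * (2 + ln R)\<^sup>2"
    by (simp add: power2_eq_square power3_eq_cube)
  finally show ?thesis .
qed

lemma bound_le_N4_ln8:
  fixes N W :: nat
  assumes "1 \<le> W" and W_cube: "real W ^ 3 \<le> (ln (real N))\<^sup>2" and ln_sq: "(ln (real N))\<^sup>2 \<le> real N"
  defines "R \<equiv> real (W * (N + 1))"
  shows "48 * real N * R ^ 3 * ln R ^ 4 * (2 + ln R)\<^sup>2 \<le> 777600 * real N ^ 4 * ln (real N) ^ 8"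
proof -
  define L where "L = ln (real N)"
  have "1 \<le> real W" using \<open>1 \<le> W\<close> by simp
  have "real W \<le> real W ^ 3"
    using power_increasing[of 1 3 "real W"] \<open>1 \<le> real W\<close> by simp
  have "1 \<le> real W ^ 3" using \<open>1 \<le> real W\<close> by simp
  then have "1\<^sup>2 \<le> L\<^sup>2" using W_cube unfolding L_def by simp
  moreover have "0 \<le> L" unfolding L_def by (cases "N = 0") auto
  ultimately have "1 \<le> L" by (rule power2_le_imp_le)
  then have "1 \<le> real N" unfolding L_def by (cases "N = 0") auto
  have "real W \<le> real N"
    using \<open>real W \<le> real W ^ 3\<close> W_cube ln_sq by linarith
  have "1 \<le> W * (N + 1)" using \<open>1 \<le> W\<close> by (simp add: Suc_le_eq)
  then have "1 \<le> R" unfolding R_def by (metis of_nat_1 of_nat_le_iff)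
  have "R \<le> 2 * real W * real N"
    unfolding R_def using \<open>1 \<le> real N\<close> \<open>1 \<le> real W\<close> by (simp add: algebra_simps)
  have R_cube: "R ^ 3 \<le> 8 * L\<^sup>2 * real N ^ 3"
  proof -
    have "R ^ 3 \<le> (2 * real W * real N) ^ 3"
      using \<open>R \<le> 2 * real W * real N\<close> \<open>1 \<le> R\<close> by (intro power_mono) auto
    also have "\<dots> = 8 * real W ^ 3 * real N ^ 3" by (simp add: power_mult_distrib)
    also have "\<dots> \<le> 8 * L\<^sup>2 * real N ^ 3"
      using W_cube unfolding L_def by (simp add: mult_right_mono)
    finally show ?thesis .
  qed
  have "ln R \<le> ln (2 * real N ^ 2)"
  proof -
    have "2 * real W * real N \<le> 2 * real N * real N"
      using \<open>real W \<le> real N\<close> by (simp add: mult_right_mono)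
    then show ?thesis
      using \<open>1 \<le> R\<close> \<open>R \<le> 2 * real W * real N\<close> by (simp add: power2_eq_square)
  qed
  also have "\<dots> = ln 2 + 2 * L"
    unfolding L_def using \<open>1 \<le> real N\<close> by (simp add: ln_mult ln_realpow)
  finally have ln_R: "ln R \<le> 3 * L"
    using ln_2_less_1 \<open>1 \<le> L\<close> by linarith
  have "0 \<le> ln R" using \<open>1 \<le> R\<close> by simp
  have "48 * real N * R ^ 3 * ln R ^ 4 * (2 + ln R)\<^sup>2
      \<le> 48 * real N * (8 * L\<^sup>2 * real N ^ 3) * (3 * L) ^ 4 * (5 * L)\<^sup>2"
    using R_cube ln_R \<open>0 \<le> ln R\<close> \<open>1 \<le> L\<close> \<open>1 \<le> R\<close>
    by (intro mult_mono mult_left_mono power_mono) auto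
  also have "\<dots> = 777600 * real N ^ 4 * L ^ 8"
    by (simp add: power_mult_distrib eval_nat_numeral)
  finally show ?thesis unfolding L_def .
qed

lemma WW_pos: "0 < WW w"
  unfolding WW_def by (auto intro!: prod_pos simp: prime_gt_0_nat)

lemma WW_le:
  assumes "1 \<le> w"
  shows "real (WW w) \<le> 8 * w powr w"
proof -
  define S where "S = {p :: nat. prime p \<and> 2 < p \<and> real p < w}"
  have "S \<subseteq> {1..nat \<lfloor>w\<rfloor>}"
    unfolding S_def by (auto simp: prime_ge_1_nat le_nat_floor less_imp_le)
  then have "finite S" "card S \<le> nat \<lfloor>w\<rfloor>"
    using finite_subset card_mono[of "{1..nat \<lfloor>w\<rfloor>}" S] by auto
  then have "real (card S) \<le> w" using \<open>1 \<le> w\<close> by linarith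
  have "real (\<Prod>p\<in>S. p) \<le> (\<Prod>p\<in>S. w)"
    unfolding of_nat_prod by (intro prod_mono) (auto simp: S_def)
  also have "\<dots> = w powr real (card S)"
    using \<open>1 \<le> w\<close> by (simp add: powr_realpow)
  also have "\<dots> \<le> w powr w"
    using \<open>real (card S) \<le> w\<close> \<open>1 \<le> w\<close> by (rule powr_mono)
  finally show ?thesis
    unfolding WW_def S_def[symmetric] by simp
qed

lemma eventually_WW_cube_le:
  fixes C\<^sub>0 :: real
  assumes "0 < C\<^sub>0"
  shows "eventually (\<lambda>N::nat. \<forall>w. 3 \<le> w \<longrightarrow> w \<le> C\<^sub>0 * ln (ln (ln (real N))) \<longrightarrow>
           real (WW w) ^ 3 \<le> (ln (real N))\<^sup>2) sequentially"
proof -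
  have "eventually (\<lambda>N::nat. (8 * (C\<^sub>0 * ln (ln (ln (real N)))) powr (C\<^sub>0 * ln (ln (ln (real N))))) ^ 3
      \<le> (ln (real N))\<^sup>2) sequentially"
    using assms by real_asymp
  then show ?thesis
  proof (rule eventually_mono, intro allI impI)
    fix N :: nat and w :: real
    define x where "x = C\<^sub>0 * ln (ln (ln (real N)))"
    assume "(8 * x powr x) ^ 3 \<le> (ln (real N))\<^sup>2" "3 \<le> w" "w \<le> x"
    have "real (WW w) \<le> 8 * w powr w"
      using \<open>3 \<le> w\<close> by (intro WW_le) simp
    also have "\<dots> \<le> 8 * x powr w"
      using \<open>3 \<le> w\<close> \<open>w \<le> x\<close> by (simp add: powr_mono2)
    also have "\<dots> \<le> 8 * x powr x"
      using \<open>3 \<le> w\<close> \<open>w \<le> x\<close> by (simp add: powr_mono)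
    finally have "real (WW w) ^ 3 \<le> (8 * x powr x) ^ 3"
      by (intro power_mono) simp_all
    with \<open>(8 * x powr x) ^ 3 \<le> (ln (real N))\<^sup>2\<close> show "real (WW w) ^ 3 \<le> (ln (real N))\<^sup>2"
      by linarith
  qed
qed

theorem lemma5p2:
  fixes C\<^sub>0 :: real
  assumes "C\<^sub>0 > 0"
  shows "\<exists>C::real. \<exists>N\<^sub>0::nat. \<forall>N\<ge>N\<^sub>0. \<forall>w::real. \<forall>b::nat. \<forall>f::nat \<Rightarrow> complex.
           3 \<le> w \<longrightarrow> w \<le> C\<^sub>0 * ln (ln (ln (real N))) \<longrightarrow>
           b \<in> ZW (WW w) \<longrightarrow>
           (\<forall>n\<in>{1..N}. norm (f n) \<le> nu N (WW w) b n) \<longrightarrow>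
           (\<Sum>n\<in>{1..N}. norm (fhat N f (real n / real N)) ^ 4)
             \<le> C * real N ^ 4 * (ln (real N)) ^ 8"
proof -
  have "eventually (\<lambda>N::nat. (\<forall>w. 3 \<le> w \<longrightarrow> w \<le> C\<^sub>0 * ln (ln (ln (real N))) \<longrightarrow>
      real (WW w) ^ 3 \<le> (ln (real N))\<^sup>2) \<and> (ln (real N))\<^sup>2 \<le> real N) sequentially"
    using eventually_WW_cube_le[OF assms] by (rule eventually_conj) real_asymp
  then obtain N\<^sub>0 where N\<^sub>0: "\<And>N w. N\<^sub>0 \<le> N \<Longrightarrow> 3 \<le> w \<Longrightarrow> w \<le> C\<^sub>0 * ln (ln (ln (real N))) \<Longrightarrow>
      real (WW w) ^ 3 \<le> (ln (real N))\<^sup>2 \<and> (ln (real N))\<^sup>2 \<le> real N"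
    unfolding eventually_sequentially by blast
  show ?thesis
  proof (intro exI[of _ "777600 :: real"] exI[of _ N\<^sub>0] allI impI)
    fix N :: nat and w :: real and b :: nat and f :: "nat \<Rightarrow> complex"
    assume "N\<^sub>0 \<le> N" "3 \<le> w" "w \<le> C\<^sub>0 * ln (ln (ln (real N)))" "b \<in> ZW (WW w)"
      and bound: "\<forall>n\<in>{1..N}. norm (f n) \<le> nu N (WW w) b n"
    have "b \<le> WW w" using \<open>b \<in> ZW (WW w)\<close> unfolding ZW_def by simp
    have "1 \<le> WW w" using WW_pos[of w] by (simp add: Suc_le_eq)
    from N\<^sub>0[OF \<open>N\<^sub>0 \<le> N\<close> \<open>3 \<le> w\<close> \<open>w \<le> _\<close>]
    have "real (WW w) ^ 3 \<le> (ln (real N))\<^sup>2" "(ln (real N))\<^sup>2 \<le> real N" by simp_all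
    from bound_le_N4_ln8[OF \<open>1 \<le> WW w\<close> this]
    show "(\<Sum>n\<in>{1..N}. norm (fhat N f (real n / real N)) ^ 4) \<le> 777600 * real N ^ 4 * ln (real N) ^ 8"
      by (rule order_trans[OF sum_norm_fhat_power4_le_nu[OF WW_pos \<open>b \<le> WW w\<close> bound]])
  qed
qed

end
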